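(* Let $\mathbb{X},\mathbb{Y}$ be two-dimensional smooth real Banach spaces, with $\mathbb{Y}$ in addition strictly convex. Let $T\in\mathbb{L}(\mathbb{X},\mathbb{Y})$ have rank two, $\|T\|=1$ and $M_T=\{\pm x\}$. Let $y\in x^\perp\cap S_{\mathbb{X}}$; then $0<\|Ty\|<1$, and set $w=Ty/\|Ty\|$. Then $T$ is not an extreme contraction if and only if $(x,Tx)$ is a $\mu$-CPP with respect to the pair $(y,w)$ for some $\mu>\|Ty\|$.
   Context: $M_T=\{x\in S_{\mathbb{X}}:\|Tx\|=\|T\|\}$. A norm one $T$ is an extreme contraction if it is an extreme point of the closed unit ball of $\mathbb{L}(\mathbb{X},\mathbb{Y})$. $B(x,r)=\{u:\|u-x\|<r\}$. $x\perp_B y$ means $\|x+\lambda y\|\ge\|x\|$ for all real $\lambda$; $x^\perp=\{y:x\perp_By\}$. For $x\in S_{\mathbb{X}}$, $y'\in S_{\mathbb{Y}}$, $z_0\in x^\perp\cap S_{\mathbb{X}}$, $w_0\in y'^\perp\cap S_{\mathbb{Y}}$ and $\mu>0$, $(x,y')$ is a $\mu$-CPP with respect to $(z_0,w_0)$ if there exists $r>0$ such that for all $a,b\in\mathbb{R}$, $ax+bz_0\in B(x,r)\cap S_{\mathbb{X}}$ implies $\|ay'+b\mu w_0\|\le1$. *)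

theory Defs
  imports "HOL-Analysis.Analysis"
begin

definition smooth_space :: "'a::real_normed_vector itself \<Rightarrow> bool" where
  "smooth_space _ \<longleftrightarrow> (\<forall>x::'a. norm x = 1 \<longrightarrow>
     (\<exists>!f::'a \<Rightarrow> real. bounded_linear f \<and> onorm f = 1 \<and> f x = 1))"

definition strictly_convex_space :: "'a::real_normed_vector itself \<Rightarrow> bool" where
  "strictly_convex_space _ \<longleftrightarrow> (\<forall>x y::'a. norm x = 1 \<and> norm y = 1 \<and> x \<noteq> y
     \<longrightarrow> norm ((1/2) *\<^sub>R (x + y)) < 1)"

definition bj_orth :: "'a::real_normed_vector \<Rightarrow> 'a \<Rightarrow> bool" where
  "bj_orth x y \<longleftrightarrow> (\<forall>l::real. norm (x + l *\<^sub>R y) \<ge> norm x)"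

definition norm_attain :: "('a::real_normed_vector \<Rightarrow> 'b::real_normed_vector) \<Rightarrow> 'a set" where
  "norm_attain T = {x. norm x = 1 \<and> norm (T x) = onorm T}"

definition extreme_contraction :: "('a::real_normed_vector \<Rightarrow> 'b::real_normed_vector) \<Rightarrow> bool" where
  "extreme_contraction T \<longleftrightarrow> bounded_linear T \<and> onorm T = 1 \<and>
     (\<forall>T1 T2 (t::real). bounded_linear T1 \<and> bounded_linear T2 \<and> onorm T1 \<le> 1 \<and> onorm T2 \<le> 1
        \<and> 0 < t \<and> t < 1 \<and> T = (\<lambda>z. t *\<^sub>R T1 z + (1 - t) *\<^sub>R T2 z) \<longrightarrow> T1 = T2)"

definition mu_CPP :: "real \<Rightarrow> 'a::real_normed_vector \<Rightarrow> 'b::real_normed_vector \<Rightarrow> 'a \<Rightarrow> 'b \<Rightarrow> bool" where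
  "mu_CPP \<mu> x y' z0 w0 \<longleftrightarrow>
     norm x = 1 \<and> norm y' = 1 \<and> bj_orth x z0 \<and> norm z0 = 1 \<and> bj_orth y' w0 \<and> norm w0 = 1 \<and> \<mu> > 0 \<and>
     (\<exists>r>0. \<forall>a b::real. a *\<^sub>R x + b *\<^sub>R z0 \<in> ball x r \<and> norm (a *\<^sub>R x + b *\<^sub>R z0) = 1
        \<longrightarrow> norm (a *\<^sub>R y' + (b * \<mu>) *\<^sub>R w0) \<le> 1)"

end

theory Submission
  imports Defs
begin

text \<open>
  Write vectors of the domain as \<open>a x + b y\<close>. If \<open>T\<close> is not extreme, then \<open>T\<close> is the midpoint
  of the contractions \<open>T + D\<close> and \<open>T - D\<close> for some \<open>D \<noteq> 0\<close>. Strict convexity of the range at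
  the unit vector \<open>T x\<close> forces \<open>D x = 0\<close>; if \<open>f\<close> supports \<open>T x\<close>, then \<open>f \<circ> (T + D)\<close> and
  \<open>f \<circ> T\<close> both support \<open>x\<close>, so smoothness of the domain gives \<open>f \<circ> D = 0\<close>. Hence \<open>D\<close> is a
  multiple of \<open>a x + b y \<mapsto> b T y\<close>: stretching \<open>T\<close> along \<open>T y\<close>,
  \<open>a x + b y \<mapsto> a T x + (1 + c) b T y\<close>, still gives a contraction for some \<open>c > 0\<close>, and this is
  the \<open>\<mu>\<close>-CPP with \<open>\<mu> = (1 + c) \<parallel>T y\<parallel>\<close>.

  Conversely, the \<open>\<mu>\<close>-CPP and convexity of the unit ball keep the stretches by \<open>\<plusminus>\<epsilon>\<close> inside the
  unit ball near \<open>\<plusminus>x\<close>, while on the rest of the compact unit sphere \<open>\<parallel>T u\<parallel> \<le> 1 - \<delta>\<close> because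
  \<open>T\<close> attains its norm only at \<open>\<plusminus>x\<close>. So \<open>T\<close> is the midpoint of two distinct contractions.
\<close>

lemma subspace_eq_UNIV_of_dim:
  fixes V :: "'a::real_vector set"
  assumes "subspace V" and "dim V = dim (UNIV :: 'a set)" and "dim (UNIV :: 'a set) \<noteq> 0"
  shows "V = UNIV"
proof (rule ccontr)
  assume "V \<noteq> UNIV"
  then obtain z where z: "z \<notin> V" by auto
  obtain B where B: "B \<subseteq> V" "independent B" "V \<subseteq> span B" "card B = dim V"
    using real_vector.basis_exists by blast
  obtain C :: "'a set" where C: "independent C" "UNIV \<subseteq> span C" "card C = dim (UNIV :: 'a set)"
    using real_vector.basis_exists by blast
  have "z \<notin> span B"
    using z real_vector.span_minimal[OF B(1) assms(1)] by auto
  then have indep: "independent (insert z B)" and "z \<notin> B"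
    using real_vector.independent_insertI[OF _ B(2)] real_vector.span_base[of z B] by blast+
  have "finite B" "finite C"
    using B(4) C(3) assms(2,3) by (auto intro!: card_ge_0_finite)
  have "card (insert z B) \<le> card C"
    using real_vector.independent_span_bound[OF \<open>finite C\<close> indep] C(2) by auto
  then show False
    using \<open>finite B\<close> \<open>z \<notin> B\<close> B(4) C(3) assms(2) by simp
qed

lemma norm_le_if_onorm_le_one:
  assumes "bounded_linear f" and "onorm f \<le> 1"
  shows "norm (f z) \<le> norm z"
  using onorm[OF assms(1), of z] mult_right_mono[OF assms(2) norm_ge_zero[of z]] by simp

lemma onorm_le_one_if_sphere:
  fixes f :: "'a::real_normed_vector \<Rightarrow> 'b::real_normed_vector"
  assumes "bounded_linear f" and "\<And>u. norm u = 1 \<Longrightarrow> norm (f u) \<le> 1"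
  shows "onorm f \<le> 1"
proof (rule onorm_bound)
  interpret bounded_linear f by fact
  fix z :: 'a
  show "norm (f z) \<le> 1 * norm z"
  proof (cases "z = 0")
    case False
    have "f z = norm z *\<^sub>R f ((1 / norm z) *\<^sub>R z)"
      using False by (simp add: scaleR)
    moreover have "norm (f ((1 / norm z) *\<^sub>R z)) \<le> 1"
      using False by (intro assms(2)) simp
    ultimately show ?thesis
      by (simp add: mult_left_le)
  qed (simp add: zero)
qed simp

lemma norm_add_scaleR_le:
  fixes p q :: "'a::real_normed_vector"
  assumes "norm p \<le> c" and "norm (p + q) \<le> c" and "0 \<le> \<theta>" and "\<theta> \<le> 1"
  shows "norm (p + \<theta> *\<^sub>R q) \<le> c"
proof -
  have "(1 - \<theta>) *\<^sub>R p + \<theta> *\<^sub>R (p + q) \<in> cball 0 c"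
    using assms by (intro convexD_alt convex_cball) auto
  moreover have "(1 - \<theta>) *\<^sub>R p + \<theta> *\<^sub>R (p + q) = p + \<theta> *\<^sub>R q"
    by (simp add: algebra_simps)
  ultimately show ?thesis by simp
qed

lemma bj_orth_scaleR_le_norm:
  fixes u v :: "'a::real_normed_vector"
  assumes "bj_orth u v"
  shows "\<bar>a\<bar> * norm u \<le> norm (a *\<^sub>R u + b *\<^sub>R v)"
proof (cases "a = 0")
  case False
  have "a *\<^sub>R u + b *\<^sub>R v = a *\<^sub>R (u + (b / a) *\<^sub>R v)"
    using False by (simp add: scaleR_add_right)
  moreover have "norm u \<le> norm (u + (b / a) *\<^sub>R v)"
    using assms unfolding bj_orth_def by blast
  ultimately show ?thesis by (simp add: mult_left_mono)
qed simp

lemma bj_orth_if_supporting_functional: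
  assumes "bounded_linear f" and "onorm f \<le> 1" and "f u = norm u" and "f v = 0"
  shows "bj_orth u v"
  unfolding bj_orth_def
proof
  interpret bounded_linear f by fact
  fix l :: real
  have "norm u = f (u + l *\<^sub>R v)"
    using assms(3,4) by (simp add: add scaleR)
  also have "\<dots> \<le> norm (u + l *\<^sub>R v)"
    using norm_le_if_onorm_le_one[OF assms(1,2)] by (metis abs_le_D1 real_norm_def)
  finally show "norm u \<le> norm (u + l *\<^sub>R v)" .
qed

lemma strictly_convex_space_no_segment:
  fixes v d :: "'b::real_normed_vector"
  assumes "strictly_convex_space TYPE('b)"
    and "norm v = 1" and "norm (v + d) \<le> 1" and "norm (v - d) \<le> 1"
  shows "d = 0"
proof (rule ccontr)
  assume "d \<noteq> 0"
  have mid: "(1/2) *\<^sub>R ((v + d) + (v - d)) = v"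
    by (simp add: scaleR_add_right scaleR_diff_right flip: scaleR_add_left)
  have "2 = norm ((v + d) + (v - d))"
    using assms(2) by (simp flip: scaleR_2)
  also have "\<dots> \<le> norm (v + d) + norm (v - d)"
    by (rule norm_triangle_ineq)
  finally have "norm (v + d) = 1" "norm (v - d) = 1"
    using assms(3,4) by linarith+
  moreover have "v + d \<noteq> v - d"
  proof
    assume "v + d = v - d"
    then have "2 *\<^sub>R d = 0"
      by (simp add: scaleR_2 algebra_simps)
    with \<open>d \<noteq> 0\<close> show False by simp
  qed
  ultimately have "norm v < 1"
    using assms(1) mid unfolding strictly_convex_space_def by metis
  with assms(2) show False by simp
qed

lemma smooth_space_supporting_functional:
  fixes v :: "'a::real_normed_vector"
  assumes "smooth_space TYPE('a)" and "norm v = 1"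
  obtains f :: "'a \<Rightarrow> real" where "bounded_linear f" and "onorm f = 1" and "f v = 1"
  using ex1_implies_ex[OF assms(1)[unfolded smooth_space_def, rule_format, OF assms(2)]] that
  by auto

lemma smooth_space_supporting_functional_unique:
  fixes g h :: "'a::real_normed_vector \<Rightarrow> real"
  assumes "smooth_space TYPE('a)" and "norm v = 1"
    and "bounded_linear g" "onorm g \<le> 1" "g v = 1"
    and "bounded_linear h" "onorm h \<le> 1" "h v = 1"
  shows "g = h"
proof -
  have "onorm g = 1" "onorm h = 1"
    using onorm[OF assms(3), of v] onorm[OF assms(6), of v] assms by simp_all
  then show ?thesis
    using assms(1)[unfolded smooth_space_def, rule_format, OF assms(2)] assms(3,5,6,8)
    by (metis (no_types, lifting))
qed

lemma onorm_convex_combination_le_one: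
  assumes "bounded_linear T1" and "bounded_linear T2" and "onorm T1 \<le> 1" and "onorm T2 \<le> 1"
    and "0 \<le> a" and "0 \<le> b" and "a + b = 1"
  shows "onorm (\<lambda>z. a *\<^sub>R T1 z + b *\<^sub>R T2 z) \<le> 1"
proof -
  have "onorm (\<lambda>z. a *\<^sub>R T1 z + b *\<^sub>R T2 z) \<le> a * onorm T1 + b * onorm T2"
    using assms(1,2,5,6) by (intro onorm_triangle_le)
      (simp_all add: onorm_scaleR bounded_linear_scaleR_right bounded_linear_compose)
  also have "\<dots> \<le> a * 1 + b * 1"
    using assms(3-6) by (intro add_mono mult_left_mono)
  finally show ?thesis
    using assms(7) by simp
qed

lemma onorm_compose_le_one:
  assumes "bounded_linear f" and "bounded_linear g" and "onorm f \<le> 1" and "onorm g \<le> 1"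
  shows "onorm (\<lambda>z. f (g z)) \<le> 1"
  using onorm_compose[OF assms(1,2)] mult_le_one[OF assms(3) onorm_pos_le[OF assms(2)] assms(4)]
  by (simp add: o_def)

lemma symmetric_perturbation_if_not_extreme_contraction:
  fixes T :: "'a::real_normed_vector \<Rightarrow> 'b::real_normed_vector"
  assumes "bounded_linear T" and "onorm T = 1" and "\<not> extreme_contraction T"
  obtains D where "bounded_linear D" and "D \<noteq> (\<lambda>_. 0)"
    and "onorm (\<lambda>z. T z + D z) \<le> 1" and "onorm (\<lambda>z. T z - D z) \<le> 1"
proof -
  obtain T1 T2 t where bl: "bounded_linear T1" "bounded_linear T2"
    and onorm_le: "onorm T1 \<le> 1" "onorm T2 \<le> 1" and t: "0 < t" "t < 1"
    and T_eq: "T = (\<lambda>z. t *\<^sub>R T1 z + (1 - t) *\<^sub>R T2 z)" and "T1 \<noteq> T2"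
    using assms unfolding extreme_contraction_def by blast
  define e where "e = min t (1 - t)"
  define D where "D z = e *\<^sub>R (T1 z - T2 z)" for z
  have e: "0 < e" "e \<le> t" "e \<le> 1 - t"
    using t by (auto simp: e_def)
  have "D \<noteq> (\<lambda>_. 0)"
  proof
    assume "D = (\<lambda>_. 0)"
    then have "e *\<^sub>R (T1 z - T2 z) = 0" for z
      by (metis D_def)
    with \<open>T1 \<noteq> T2\<close> e(1) show False
      by auto
  qed
  have shift: "onorm (\<lambda>z. T z + s *\<^sub>R D z) \<le> 1" if "s = 1 \<or> s = -1" for s
  proof -
    have "(\<lambda>z. T z + s *\<^sub>R D z) = (\<lambda>z. (t + s * e) *\<^sub>R T1 z + (1 - t - s * e) *\<^sub>R T2 z)"
      unfolding D_def by (simp add: T_eq algebra_simps)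
    moreover have "0 \<le> t + s * e" and "0 \<le> 1 - t - s * e"
      using that e by auto
    ultimately show ?thesis
      using onorm_convex_combination_le_one[OF bl onorm_le] by simp
  qed
  have "bounded_linear D"
    unfolding D_def by (intro bounded_linear_intros bl)
  from this \<open>D \<noteq> (\<lambda>_. 0)\<close> show ?thesis
    by (rule that) (use shift[of 1] shift[of "-1"] in simp_all)
qed

lemma not_extreme_contraction_if_symmetric_perturbation:
  fixes T :: "'a::real_normed_vector \<Rightarrow> 'b::real_normed_vector"
  assumes "bounded_linear T" and "bounded_linear D" and "D \<noteq> (\<lambda>_. 0)"
    and "onorm (\<lambda>z. T z + D z) \<le> 1" and "onorm (\<lambda>z. T z - D z) \<le> 1"
  shows "\<not> extreme_contraction T"
proof
  assume "extreme_contraction T"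
  then have contr: "\<And>T1 T2 t. bounded_linear T1 \<Longrightarrow> bounded_linear T2 \<Longrightarrow>
      onorm T1 \<le> 1 \<Longrightarrow> onorm T2 \<le> 1 \<Longrightarrow> 0 < t \<Longrightarrow> t < 1 \<Longrightarrow>
      T = (\<lambda>z. t *\<^sub>R T1 z + (1 - t) *\<^sub>R T2 z) \<Longrightarrow> T1 = T2"
    unfolding extreme_contraction_def by blast
  have "T = (\<lambda>z. (1/2) *\<^sub>R (T z + D z) + (1 - 1/2) *\<^sub>R (T z - D z))"
    by (simp add: scaleR_add_right scaleR_diff_right flip: scaleR_add_left)
  then have "(\<lambda>z. T z + D z) = (\<lambda>z. T z - D z)"
    by (rule contr[OF bounded_linear_add[OF assms(1,2)] bounded_linear_sub[OF assms(1,2)]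
          assms(4,5), rotated 2]) simp_all
  then have "2 *\<^sub>R D z = 0" for z
    by (drule_tac fun_cong[of _ _ z]) (simp add: scaleR_2 algebra_simps)
  with assms(3) show False
    by auto
qed

locale bj_basis =
  fixes x y :: "'a::real_normed_vector"
  assumes dim_UNIV: "dim (UNIV :: 'a set) = 2"
    and norm_x: "norm x = 1" and norm_y: "norm y = 1" and orth: "bj_orth x y"
begin

lemma coeffs_unique:
  assumes "a *\<^sub>R x + b *\<^sub>R y = a' *\<^sub>R x + b' *\<^sub>R y"
  shows "a = a'" and "b = b'"
proof -
  have diff: "(a - a') *\<^sub>R x + (b - b') *\<^sub>R y = 0"
    using assms by (simp add: algebra_simps)
  show "a = a'"
    using bj_orth_scaleR_le_norm[OF orth, of "a - a'" "b - b'"] diff norm_x by simp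
  with diff norm_y show "b = b'"
    by auto
qed

lemma span_pair: "span {x, y} = UNIV"
proof -
  have "x \<noteq> y"
    using coeffs_unique(1)[of 1 0 0 1] by auto
  moreover have "x \<notin> span {y}"
  proof
    assume "x \<in> span {y}"
    then obtain k where "1 *\<^sub>R x + 0 *\<^sub>R y = 0 *\<^sub>R x + k *\<^sub>R y"
      by (auto simp: real_vector.span_singleton)
    then show False
      using coeffs_unique(1) by fastforce
  qed
  moreover have "y \<noteq> 0"
    using norm_y by auto
  ultimately have "independent {x, y}"
    by (simp add: real_vector.independent_insert)
  then have "dim (span {x, y}) = dim (UNIV :: 'a set)"
    using real_vector.dim_eq_card_independent[of "{x, y}"] \<open>x \<noteq> y\<close> dim_UNIV by simp
  then show ?thesis
    by (rule subspace_eq_UNIV_of_dim[OF real_vector.subspace_span]) (simp add: dim_UNIV)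
qed

lemma exists_coeffs: "\<exists>a b. z = a *\<^sub>R x + b *\<^sub>R y"
proof -
  have "z \<in> span (insert x {y})"
    using span_pair by simp
  then obtain a where "z - a *\<^sub>R x \<in> span {y}"
    by (auto simp: real_vector.span_breakdown_eq)
  then obtain b where "z - a *\<^sub>R x = b *\<^sub>R y"
    by (auto simp: real_vector.span_singleton)
  then have "z = a *\<^sub>R x + b *\<^sub>R y"
    by (simp add: algebra_simps)
  then show ?thesis by blast
qed

definition coord_x :: "'a \<Rightarrow> real" where
  "coord_x z = (THE a. \<exists>b. z = a *\<^sub>R x + b *\<^sub>R y)"

definition coord_y :: "'a \<Rightarrow> real" where
  "coord_y z = (THE b. \<exists>a. z = a *\<^sub>R x + b *\<^sub>R y)"

lemma coords_eq:
  assumes "z = a *\<^sub>R x + b *\<^sub>R y"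
  shows "coord_x z = a" and "coord_y z = b"
  unfolding coord_x_def coord_y_def
  using assms coeffs_unique by (blast intro: the_equality)+

lemma coord_decomp: "z = coord_x z *\<^sub>R x + coord_y z *\<^sub>R y"
  using exists_coeffs[of z] coords_eq by metis

lemma coord_x_x [simp]: "coord_x x = 1" and coord_y_x [simp]: "coord_y x = 0"
  and coord_x_y [simp]: "coord_x y = 0" and coord_y_y [simp]: "coord_y y = 1"
  using coords_eq[of x 1 0] coords_eq[of y 0 1] by simp_all

lemma coords_add: "coord_x (u + v) = coord_x u + coord_x v" "coord_y (u + v) = coord_y u + coord_y v"
  using coords_eq[of "u + v" "coord_x u + coord_x v" "coord_y u + coord_y v"]
    coord_decomp[of u] coord_decomp[of v] by (simp_all add: algebra_simps)

lemma coords_scaleR: "coord_x (c *\<^sub>R u) = c * coord_x u" "coord_y (c *\<^sub>R u) = c * coord_y u"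
proof -
  have "c *\<^sub>R u = (c * coord_x u) *\<^sub>R x + (c * coord_y u) *\<^sub>R y"
    using coord_decomp[of u] by (metis scaleR_add_right scaleR_scaleR)
  then show "coord_x (c *\<^sub>R u) = c * coord_x u" "coord_y (c *\<^sub>R u) = c * coord_y u"
    by (rule coords_eq)+
qed

lemma coords_uminus: "coord_x (- u) = - coord_x u" "coord_y (- u) = - coord_y u"
  using coords_scaleR[of "-1" u] by simp_all

lemma abs_coord_x_le: "\<bar>coord_x z\<bar> \<le> norm z"
  using bj_orth_scaleR_le_norm[OF orth, of "coord_x z" "coord_y z"] coord_decomp[of z] norm_x
  by simp

lemma abs_coord_y_le: "\<bar>coord_y z\<bar> \<le> 2 * norm z"
proof -
  have "\<bar>coord_y z\<bar> = norm (z - coord_x z *\<^sub>R x)"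
    using norm_y by (subst (2) coord_decomp) simp
  also have "\<dots> \<le> norm z + \<bar>coord_x z\<bar>"
    using norm_triangle_ineq4[of z "coord_x z *\<^sub>R x"] norm_x by simp
  finally show ?thesis
    using abs_coord_x_le[of z] by simp
qed

lemma bounded_linear_coord_x: "bounded_linear coord_x"
  by (rule bounded_linear_intro[where K = 1]) (simp_all add: coords_add coords_scaleR abs_coord_x_le)

lemma bounded_linear_coord_y: "bounded_linear coord_y"
proof (rule bounded_linear_intro[where K = 2])
  show "norm (coord_y z) \<le> norm z * 2" for z
    using abs_coord_y_le[of z] by (simp add: mult.commute)
qed (simp_all add: coords_add coords_scaleR)

lemma onorm_coord_x_le: "onorm coord_x \<le> 1"
  by (rule onorm_bound) (simp_all add: abs_coord_x_le)

lemma compact_unit_sphere: "compact (sphere (0 :: 'a) 1)"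
proof -
  define \<Phi> where "\<Phi> p = fst p *\<^sub>R x + snd p *\<^sub>R y" for p :: "real \<times> real"
  have cont: "continuous_on UNIV \<Phi>"
    unfolding \<Phi>_def by (intro continuous_intros)
  define K where "K = ({-1..1} \<times> {-2..2}) \<inter> {p. norm (\<Phi> p) = 1}"
  have "compact K"
    unfolding K_def
    by (intro compact_Int_closed compact_Times compact_Icc closed_Collect_eq continuous_intros
        continuous_on_subset[OF cont]) auto
  have "sphere 0 1 = \<Phi> ` K"
  proof
    show "\<Phi> ` K \<subseteq> sphere 0 1"
      by (auto simp: K_def)
    show "sphere 0 1 \<subseteq> \<Phi> ` K"
    proof
      fix u :: 'a
      assume "u \<in> sphere 0 1"
      then have "u = \<Phi> (coord_x u, coord_y u)" "(coord_x u, coord_y u) \<in> K"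
        using abs_coord_x_le[of u] abs_coord_y_le[of u] coord_decomp[of u]
        by (auto simp: K_def \<Phi>_def abs_le_iff)
      then show "u \<in> \<Phi> ` K"
        by blast
    qed
  qed
  then show ?thesis
    using compact_continuous_image[OF continuous_on_subset[OF cont] \<open>compact K\<close>] by simp
qed

end

locale rank_two_contraction = bj_basis x y
  for x y :: "'a::real_normed_vector" +
  fixes T :: "'a \<Rightarrow> 'b::real_normed_vector"
  assumes dim_UNIV_range: "dim (UNIV :: 'b set) = 2"
    and smooth_domain: "smooth_space TYPE('a)" and smooth_range: "smooth_space TYPE('b)"
    and strictly_convex_range: "strictly_convex_space TYPE('b)"
    and bounded_linear_T: "bounded_linear T" and rank_T: "dim (range T) = 2"
    and onorm_T: "onorm T = 1" and norm_attain_T: "norm_attain T = {x, -x}"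
begin

interpretation T: bounded_linear T
  by (rule bounded_linear_T)

lemma norm_T_x: "norm (T x) = 1"
  using norm_attain_T onorm_T by (auto simp: norm_attain_def)

lemma norm_T_le: "norm (T z) \<le> norm z"
  using norm_le_if_onorm_le_one[OF bounded_linear_T] onorm_T by simp

lemma norm_T_eq_1_iff: "norm u = 1 \<Longrightarrow> norm (T u) = 1 \<longleftrightarrow> u = x \<or> u = -x"
  using norm_attain_T onorm_T unfolding norm_attain_def by (auto simp: set_eq_iff)

lemma T_decomp: "T z = coord_x z *\<^sub>R T x + coord_y z *\<^sub>R T y"
  by (subst coord_decomp[of z]) (simp add: T.add T.scaleR)

lemma surj_T: "range T = UNIV"
  by (rule subspace_eq_UNIV_of_dim)
    (simp_all add: linear_subspace_image T.linear rank_T dim_UNIV_range)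

lemma T_y_neq_0: "T y \<noteq> 0"
proof
  assume "T y = 0"
  have "range T \<subseteq> span {T x}"
  proof
    fix v
    assume "v \<in> range T"
    then obtain z where "v = T z"
      by blast
    then have "v = coord_x z *\<^sub>R T x"
      using T_decomp[of z] \<open>T y = 0\<close> by simp
    then show "v \<in> span {T x}"
      by (simp add: real_vector.span_base real_vector.span_scale)
  qed
  then have "dim (range T) \<le> card {T x}"
    by (rule real_vector.dim_le_card) simp
  with rank_T show False
    by simp
qed

lemma norm_T_y_less_1: "norm (T y) < 1"
proof -
  have "y \<noteq> x" "y \<noteq> -x"
    using coeffs_unique(1)[of 0 1 1 0] coeffs_unique(1)[of 0 1 "-1" 0] by auto
  then show ?thesis
    using norm_T_le[of y] norm_T_eq_1_iff[OF norm_y] norm_y by fastforce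
qed

lemma norm_T_le_away_from_x:
  assumes "r > 0"
  obtains \<delta> where "\<delta> > 0"
    and "\<And>u. norm u = 1 \<Longrightarrow> u \<notin> ball x r \<union> ball (-x) r \<Longrightarrow> norm (T u) \<le> 1 - \<delta>"
proof -
  define S where "S = sphere 0 1 - (ball x r \<union> ball (-x) r)"
  have "compact S"
    unfolding S_def by (intro compact_diff compact_unit_sphere open_Un open_ball)
  have in_S: "u \<in> S" if "norm u = 1" and "u \<notin> ball x r \<union> ball (-x) r" for u
    using that by (simp add: S_def)
  show ?thesis
  proof (cases "S = {}")
    case True
    with in_S show ?thesis
      by (intro that[of 1]) auto
  next
    case False
    obtain u0 where "u0 \<in> S" and u0_max: "\<And>u. u \<in> S \<Longrightarrow> norm (T u) \<le> norm (T u0)"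
      using continuous_attains_sup[OF \<open>compact S\<close> False]
        continuous_on_norm[OF T.continuous_on[OF continuous_on_id]] by blast
    have "u0 \<noteq> x" "u0 \<noteq> -x"
      using \<open>u0 \<in> S\<close> assms by (auto simp: S_def)
    then have "norm (T u0) < 1"
      using \<open>u0 \<in> S\<close> norm_T_le[of u0] norm_T_eq_1_iff[of u0] by (fastforce simp: S_def)
    with in_S u0_max show ?thesis
      by (intro that[of "1 - norm (T u0)"]) auto
  qed
qed

lemma supporting_functional_T_x:
  obtains f :: "'b \<Rightarrow> real"
  where "bounded_linear f" and "onorm f \<le> 1" and "\<And>z. f (T z) = coord_x z"
proof -
  obtain f :: "'b \<Rightarrow> real" where f: "bounded_linear f" "onorm f = 1" "f (T x) = 1"
    using smooth_space_supporting_functional[OF smooth_range norm_T_x] by blast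
  have "bounded_linear (\<lambda>z. f (T z))"
    using bounded_linear_compose[OF f(1) bounded_linear_T] .
  moreover have "onorm (\<lambda>z. f (T z)) \<le> 1"
    using onorm_compose_le_one[OF f(1) bounded_linear_T] f(2) onorm_T by simp
  ultimately have "(\<lambda>z. f (T z)) = coord_x"
    using f(3) bounded_linear_coord_x onorm_coord_x_le
    by (intro smooth_space_supporting_functional_unique[OF smooth_domain norm_x]) simp_all
  then show ?thesis
    using f(2) by (intro that[OF f(1)]) (simp_all add: fun_eq_iff)
qed

definition w :: 'b where
  "w = (1 / norm (T y)) *\<^sub>R T y"

lemma norm_w: "norm w = 1" and T_y_eq: "T y = norm (T y) *\<^sub>R w"
  using T_y_neq_0 by (simp_all add: w_def)

lemma bj_orth_T_x_w: "bj_orth (T x) w"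
proof -
  obtain f where f: "bounded_linear f" "onorm f \<le> 1" "\<And>z. f (T z) = coord_x z"
    using supporting_functional_T_x by blast
  interpret f: bounded_linear f
    by (rule f(1))
  show ?thesis
    by (rule bj_orth_if_supporting_functional[OF f(1,2)]) (simp_all add: f(3) norm_T_x w_def f.scaleR)
qed

lemma bounded_linear_coord_y_T_y: "bounded_linear (\<lambda>z. (c * coord_y z) *\<^sub>R T y)"
  by (rule bounded_linear_compose[OF bounded_linear_scaleR_left
        bounded_linear_compose[OF bounded_linear_mult_right bounded_linear_coord_y]])

definition T_stretch :: "real \<Rightarrow> 'a \<Rightarrow> 'b" where
  "T_stretch s z = T z + (s * coord_y z) *\<^sub>R T y"

lemma bounded_linear_T_stretch: "bounded_linear (T_stretch s)"
  unfolding T_stretch_def by (rule bounded_linear_add[OF bounded_linear_T bounded_linear_coord_y_T_y])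

lemma T_stretch_coeffs: "T_stretch s (a *\<^sub>R x + b *\<^sub>R y) = a *\<^sub>R T x + (b * (1 + s)) *\<^sub>R T y"
  using coords_eq(2)[of "a *\<^sub>R x + b *\<^sub>R y" a b]
  by (simp add: T_stretch_def T.add T.scaleR algebra_simps)

lemma perturbation_vanishes_at_x:
  assumes "bounded_linear D"
    and "onorm (\<lambda>z. T z + D z) \<le> 1" and "onorm (\<lambda>z. T z - D z) \<le> 1"
  shows "D x = 0"
  using norm_le_if_onorm_le_one[OF bounded_linear_add[OF bounded_linear_T assms(1)] assms(2), of x]
    norm_le_if_onorm_le_one[OF bounded_linear_sub[OF bounded_linear_T assms(1)] assms(3), of x] norm_x
  by (intro strictly_convex_space_no_segment[OF strictly_convex_range norm_T_x]) simp_all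

lemma supporting_functional_vanishes_on_perturbation:
  assumes "bounded_linear D" and "onorm (\<lambda>z. T z + D z) \<le> 1" and "D x = 0"
    and f: "bounded_linear f" "onorm f \<le> 1" "\<And>z. f (T z) = coord_x z"
  shows "f (D z) = 0"
proof -
  interpret f: bounded_linear f
    by (rule f(1))
  have bl_plus: "bounded_linear (\<lambda>z. T z + D z)"
    using bounded_linear_add[OF bounded_linear_T assms(1)] .
  have "(\<lambda>z. f (T z + D z)) = (\<lambda>z. f (T z))"
  proof (rule smooth_space_supporting_functional_unique[OF smooth_domain norm_x])
    show "bounded_linear (\<lambda>z. f (T z + D z))"
      using bounded_linear_compose[OF f(1) bl_plus] .
    show "onorm (\<lambda>z. f (T z + D z)) \<le> 1"
      using onorm_compose_le_one[OF f(1) bl_plus f(2) assms(2)] .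
    show "bounded_linear (\<lambda>z. f (T z))"
      using bounded_linear_compose[OF f(1) bounded_linear_T] .
    show "onorm (\<lambda>z. f (T z)) \<le> 1"
      using onorm_compose_le_one[OF f(1) bounded_linear_T f(2)] onorm_T by simp
  qed (simp_all add: f(3) f.add \<open>D x = 0\<close>)
  then show ?thesis
    by (drule_tac fun_cong[of _ _ z]) (simp add: f.add)
qed

lemma perturbation_along_T_y:
  assumes D: "bounded_linear D"
    and plus: "onorm (\<lambda>z. T z + D z) \<le> 1" and minus: "onorm (\<lambda>z. T z - D z) \<le> 1"
  obtains \<beta> where "\<And>z. D z = (\<beta> * coord_y z) *\<^sub>R T y"
proof -
  interpret D: bounded_linear D
    by (rule D)
  have "D x = 0"
    using perturbation_vanishes_at_x[OF D plus minus] .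
  obtain f where f: "bounded_linear f" "onorm f \<le> 1" "\<And>z. f (T z) = coord_x z"
    using supporting_functional_T_x by blast
  obtain z0 where "D y = T z0"
    using surj_T by (metis UNIV_I image_iff)
  moreover have "coord_x z0 = 0"
    using supporting_functional_vanishes_on_perturbation[OF D plus \<open>D x = 0\<close> f, of y]
      f(3)[of z0] \<open>D y = T z0\<close> by simp
  ultimately have D_y: "D y = coord_y z0 *\<^sub>R T y"
    using T_decomp[of z0] by simp
  show ?thesis
  proof (rule that[of "coord_y z0"])
    fix z
    have "D z = coord_y z *\<^sub>R D y"
      by (subst coord_decomp[of z]) (simp add: D.add D.scaleR \<open>D x = 0\<close>)
    then show "D z = (coord_y z0 * coord_y z) *\<^sub>R T y"
      using D_y by (simp add: mult.commute)
  qed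
qed

lemma stretch_if_not_extreme:
  assumes "\<not> extreme_contraction T"
  obtains c where "c > 0" and "onorm (T_stretch c) \<le> 1"
proof -
  obtain D where D: "bounded_linear D" "D \<noteq> (\<lambda>_. 0)"
    "onorm (\<lambda>z. T z + D z) \<le> 1" "onorm (\<lambda>z. T z - D z) \<le> 1"
    using symmetric_perturbation_if_not_extreme_contraction[OF bounded_linear_T onorm_T assms] by blast
  obtain \<beta> where D_eq: "\<And>z. D z = (\<beta> * coord_y z) *\<^sub>R T y"
    using perturbation_along_T_y[OF D(1,3,4)] by blast
  have "\<beta> \<noteq> 0"
    using D(2) D_eq by auto
  have "T_stretch \<beta> = (\<lambda>z. T z + D z)" and "T_stretch (- \<beta>) = (\<lambda>z. T z - D z)"
    by (simp_all add: fun_eq_iff T_stretch_def D_eq)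
  then show ?thesis
    using that[of \<beta>] that[of "- \<beta>"] D(3,4) \<open>\<beta> \<noteq> 0\<close> by (cases "\<beta> > 0") simp_all
qed

lemma CPP_if_stretch:
  assumes "c > 0" and "onorm (T_stretch c) \<le> 1"
  shows "mu_CPP (norm (T y) * (1 + c)) x (T x) y w"
  unfolding mu_CPP_def
proof (intro conjI exI[of _ "1::real"] allI impI)
  fix a b
  assume "a *\<^sub>R x + b *\<^sub>R y \<in> ball x 1 \<and> norm (a *\<^sub>R x + b *\<^sub>R y) = 1"
  moreover have "a *\<^sub>R T x + (b * (norm (T y) * (1 + c))) *\<^sub>R w
      = a *\<^sub>R T x + (b * (1 + c)) *\<^sub>R (norm (T y) *\<^sub>R w)"
    by (simp add: mult_ac)
  then have "a *\<^sub>R T x + (b * (norm (T y) * (1 + c))) *\<^sub>R w = T_stretch c (a *\<^sub>R x + b *\<^sub>R y)"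
    by (simp only: T_y_eq[symmetric] T_stretch_coeffs)
  ultimately show "norm (a *\<^sub>R T x + (b * (norm (T y) * (1 + c))) *\<^sub>R w) \<le> 1"
    using norm_le_if_onorm_le_one[OF bounded_linear_T_stretch assms(2)] by metis
qed (use assms(1) T_y_neq_0 in
      \<open>simp_all add: norm_x norm_T_x orth norm_y bj_orth_T_x_w norm_w\<close>)

lemma norm_T_stretch_le_near_x:
  assumes cpp: "\<And>a b. a *\<^sub>R x + b *\<^sub>R y \<in> ball x r \<Longrightarrow> norm (a *\<^sub>R x + b *\<^sub>R y) = 1 \<Longrightarrow>
      norm (a *\<^sub>R T x + (b * \<mu>) *\<^sub>R w) \<le> 1"
    and "0 < \<mu>" and "norm u = 1" and "u \<in> ball x r \<union> ball (-x) r"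
    and "-1 \<le> s" and "(1 + s) * norm (T y) \<le> \<mu>"
  shows "norm (T_stretch s u) \<le> 1"
proof -
  define \<kappa> where "\<kappa> = (1 + s) * norm (T y)"
  have "0 \<le> \<kappa>"
    using assms(5) by (simp add: \<kappa>_def)
  have at_\<mu>: "norm (coord_x u *\<^sub>R T x + (coord_y u * \<mu>) *\<^sub>R w) \<le> 1"
    using \<open>u \<in> ball x r \<union> ball (-x) r\<close>
  proof
    assume "u \<in> ball x r"
    then show ?thesis
      using cpp[of "coord_x u" "coord_y u"] coord_decomp[of u] \<open>norm u = 1\<close> by simp
  next
    assume "u \<in> ball (-x) r"
    then have "- u \<in> ball x r"
      by (simp add: dist_norm norm_minus_commute add.commute)
    moreover have "- u = (- coord_x u) *\<^sub>R x + (- coord_y u) *\<^sub>R y"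
      using coord_decomp[of "- u"] by (simp only: coords_uminus)
    ultimately have "norm ((- coord_x u) *\<^sub>R T x + (- coord_y u * \<mu>) *\<^sub>R w) \<le> 1"
      using cpp[of "- coord_x u" "- coord_y u"] \<open>norm u = 1\<close> by (metis norm_minus_cancel)
    moreover have "(- coord_x u) *\<^sub>R T x + (- coord_y u * \<mu>) *\<^sub>R w
        = - (coord_x u *\<^sub>R T x + (coord_y u * \<mu>) *\<^sub>R w)"
      by simp
    ultimately show ?thesis
      by (metis norm_minus_cancel)
  qed
  have "norm (coord_x u *\<^sub>R T x) \<le> 1"
    using abs_coord_x_le[of u] \<open>norm u = 1\<close> norm_T_x by simp
  from norm_add_scaleR_le[OF this at_\<mu>, of "\<kappa> / \<mu>"]
  have "norm (coord_x u *\<^sub>R T x + (coord_y u * \<kappa>) *\<^sub>R w) \<le> 1"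
    using \<open>0 \<le> \<kappa>\<close> assms(2,6) by (simp add: \<kappa>_def mult.commute)
  moreover have "T_stretch s u = coord_x u *\<^sub>R T x + (coord_y u * (1 + s)) *\<^sub>R T y"
    by (metis T_stretch_coeffs coord_decomp)
  moreover have "\<dots> = coord_x u *\<^sub>R T x + (coord_y u * \<kappa>) *\<^sub>R w"
    by (subst T_y_eq) (simp add: \<kappa>_def mult_ac)
  ultimately show ?thesis
    by simp
qed

lemma norm_T_stretch_le_away_from_x:
  assumes "norm u = 1" and "norm (T u) \<le> 1 - \<delta>" and "\<bar>s\<bar> \<le> \<delta> / 2"
  shows "norm (T_stretch s u) \<le> 1"
proof -
  have "norm ((s * coord_y u) *\<^sub>R T y) = \<bar>s\<bar> * \<bar>coord_y u\<bar> * norm (T y)"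
    by (simp add: abs_mult)
  also have "\<dots> \<le> \<delta> / 2 * 2 * 1"
    using assms(1,3) abs_coord_y_le[of u] norm_T_y_less_1 by (intro mult_mono) auto
  finally show ?thesis
    using assms(2) norm_triangle_ineq[of "T u" "(s * coord_y u) *\<^sub>R T y"]
    by (simp add: T_stretch_def)
qed

lemma stretch_if_CPP:
  assumes "\<mu> > norm (T y)" and "mu_CPP \<mu> x (T x) y w"
  obtains \<epsilon> where "\<epsilon> > 0" and "\<And>s. \<bar>s\<bar> \<le> \<epsilon> \<Longrightarrow> onorm (T_stretch s) \<le> 1"
proof -
  obtain r where "r > 0" and cpp: "\<And>a b. a *\<^sub>R x + b *\<^sub>R y \<in> ball x r \<Longrightarrow>
      norm (a *\<^sub>R x + b *\<^sub>R y) = 1 \<Longrightarrow> norm (a *\<^sub>R T x + (b * \<mu>) *\<^sub>R w) \<le> 1"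
    using assms(2) unfolding mu_CPP_def by blast
  obtain \<delta> where "\<delta> > 0"
    and far: "\<And>u. norm u = 1 \<Longrightarrow> u \<notin> ball x r \<union> ball (-x) r \<Longrightarrow> norm (T u) \<le> 1 - \<delta>"
    using norm_T_le_away_from_x[OF \<open>r > 0\<close>] by blast
  \<comment> \<open>The bound by \<open>\<mu> / \<parallel>T y\<parallel> - 1\<close> serves near \<open>\<plusminus>x\<close>, the bound by \<open>\<delta> / 2\<close> away from \<open>\<plusminus>x\<close>.\<close>
  define \<epsilon> where "\<epsilon> = min (min 1 (\<mu> / norm (T y) - 1)) (\<delta> / 2)"
  have "0 < \<mu>"
    using assms(1) norm_ge_zero[of "T y"] by linarith
  have "1 < \<mu> / norm (T y)"
    using assms(1) T_y_neq_0 by simp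
  then have \<epsilon>: "0 < \<epsilon>" "\<epsilon> \<le> 1" "1 + \<epsilon> \<le> \<mu> / norm (T y)" "\<epsilon> \<le> \<delta> / 2"
    using \<open>\<delta> > 0\<close> unfolding \<epsilon>_def by (simp_all del: min_le_iff_disj le_divide_eq_numeral1)
  have "onorm (T_stretch s) \<le> 1" if "\<bar>s\<bar> \<le> \<epsilon>" for s
  proof (rule onorm_le_one_if_sphere[OF bounded_linear_T_stretch])
    fix u :: 'a
    assume "norm u = 1"
    have "-1 \<le> s" and "1 + s \<le> \<mu> / norm (T y)"
      using that \<epsilon> by (simp_all add: abs_le_iff)
    then have "(1 + s) * norm (T y) \<le> \<mu>"
      using T_y_neq_0 by (simp add: pos_le_divide_eq)
    then show "norm (T_stretch s u) \<le> 1"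
      using norm_T_stretch_le_near_x[OF cpp \<open>0 < \<mu>\<close> \<open>norm u = 1\<close> _ \<open>-1 \<le> s\<close>]
        norm_T_stretch_le_away_from_x[OF \<open>norm u = 1\<close> far[OF \<open>norm u = 1\<close>]] that \<epsilon>(4)
      by fastforce
  qed
  with \<epsilon>(1) show ?thesis
    using that by blast
qed

lemma not_extreme_if_CPP:
  assumes "\<mu> > norm (T y)" and "mu_CPP \<mu> x (T x) y w"
  shows "\<not> extreme_contraction T"
proof -
  obtain \<epsilon> where "\<epsilon> > 0" and stretch_le: "\<And>s. \<bar>s\<bar> \<le> \<epsilon> \<Longrightarrow> onorm (T_stretch s) \<le> 1"
    using stretch_if_CPP[OF assms] by blast
  define D where "D z = (\<epsilon> * coord_y z) *\<^sub>R T y" for z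
  have "T_stretch \<epsilon> = (\<lambda>z. T z + D z)" and "T_stretch (- \<epsilon>) = (\<lambda>z. T z - D z)"
    by (simp_all add: fun_eq_iff T_stretch_def D_def)
  moreover have "bounded_linear D"
    unfolding D_def by (rule bounded_linear_coord_y_T_y)
  moreover have "D \<noteq> (\<lambda>_. 0)"
    using \<open>\<epsilon> > 0\<close> T_y_neq_0 by (auto simp: fun_eq_iff D_def intro!: exI[of _ y])
  ultimately show ?thesis
    using not_extreme_contraction_if_symmetric_perturbation[OF bounded_linear_T]
      stretch_le[of \<epsilon>] stretch_le[of "- \<epsilon>"] \<open>\<epsilon> > 0\<close> by auto
qed

lemma not_extreme_iff_CPP:
  "\<not> extreme_contraction T \<longleftrightarrow> (\<exists>\<mu>. \<mu> > norm (T y) \<and> mu_CPP \<mu> x (T x) y w)"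
proof
  assume "\<not> extreme_contraction T"
  then obtain c where "c > 0" and "onorm (T_stretch c) \<le> 1"
    by (rule stretch_if_not_extreme)
  then show "\<exists>\<mu>. \<mu> > norm (T y) \<and> mu_CPP \<mu> x (T x) y w"
    using CPP_if_stretch T_y_neq_0 by (intro exI[of _ "norm (T y) * (1 + c)"]) simp
qed (use not_extreme_if_CPP in blast)

end

theorem mainTheorem15:
  fixes T :: "'a::banach \<Rightarrow> 'b::banach" and x y :: 'a
  assumes "dim (UNIV :: 'a set) = 2" and "dim (UNIV :: 'b set) = 2"
    and "smooth_space TYPE('a)" and "smooth_space TYPE('b)"
    and "strictly_convex_space TYPE('b)"
    and "bounded_linear T" and "dim (range T) = 2" and "onorm T = 1"
    and "norm_attain T = {x, -x}"
    and "bj_orth x y" and "norm y = 1"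
  shows "0 < norm (T y) \<and> norm (T y) < 1 \<and>
    (\<not> extreme_contraction T \<longleftrightarrow>
      (\<exists>\<mu>. \<mu> > norm (T y) \<and> mu_CPP \<mu> x (T x) y ((1 / norm (T y)) *\<^sub>R T y)))"
proof -
  have "norm x = 1"
    using assms(9) by (auto simp: norm_attain_def)
  then interpret rank_two_contraction x y T
    using assms by (intro rank_two_contraction.intro bj_basis.intro rank_two_contraction_axioms.intro)
  show ?thesis
    using T_y_neq_0 norm_T_y_less_1 not_extreme_iff_CPP by (simp add: w_def)
qed

end
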